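(* Let $T\in\mathsf{SYT}(\lambda)$, let $\alpha=\mathsf{Des}(T)=(\alpha_1,\dots,\alpha_\ell)$, and let $I=[i,i+2m]$ be a Dyck pattern interval of $T$; write $I^-=[i,i+m-1]$ and $I^+=[i+m+1,i+2m]$. Then there is $1\le j<\ell$ with $I^-\cup\{i+m\}\subseteq\alpha^{(j)}$ and $I^+\subseteq\alpha^{(j+1)}$.
   Context: French notation; $|\lambda|=N$; $\mathsf{SYT}(\lambda)$ standard tableaux. The reading word $\mathsf{row}(T)$ reads rows left to right from the top row to the bottom row. For a permutation $\pi$ of $[N]$ and $I=[i,i+2m]\subseteq[N]$, $m\ge1$, $I$ is a Dyck pattern interval of $\pi$ if the RSK insertion tableau of the subword $\pi|_I$ of letters in $I$ has bottom row $i,\dots,i+m$ and top row $i+m+1,\dots,i+2m$; a Dyck pattern interval of $T$ is one of $\mathsf{row}(T)$. A letter $d$ is a descent of $T$ if $d+1$ lies in a strictly higher row than $d$; if the descents are $d_1<\dots<d_k$, then $\mathsf{Des}(T)=(d_1,d_2-d_1,\dots,d_k-d_{k-1},N-d_k)$. For a composition $\alpha=(\alpha_1,\dots,\alpha_\ell)$ of $N$, $\alpha^{(j)}=\{\alpha_1+\dots+\alpha_{j-1}+1,\dots,\alpha_1+\dots+\alpha_j\}$. *)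

theory Defs
  imports Main
begin

text \<open>Conventions (French notation). A tableau is a list of rows; row 0 is the
  bottom row, row k+1 lies directly above row k. Entries are natural numbers.\<close>

definition is_partition :: "nat list \<Rightarrow> bool" where
  "is_partition lam \<longleftrightarrow> sorted_wrt (\<ge>) lam \<and> 0 \<notin> set lam"

definition SYT :: "nat list \<Rightarrow> nat list list set" where
  "SYT lam = {T. is_partition lam \<and> map length T = lam
      \<and> distinct (concat T) \<and> set (concat T) = {1..sum_list lam}
      \<and> (\<forall>r < length T. sorted_wrt (<) (T ! r))
      \<and> (\<forall>r c. r + 1 < length T \<and> c < length (T ! (r + 1))
               \<longrightarrow> T ! r ! c < T ! (r + 1) ! c)}"

definition row_word :: "nat list list \<Rightarrow> nat list" where
  "row_word T = concat (rev T)"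

fun row_insert :: "nat list list \<Rightarrow> nat \<Rightarrow> nat list list" where
  "row_insert [] x = [[x]]"
| "row_insert (r # rs) x =
     (let p = takeWhile (\<lambda>z. z < x) r; s = dropWhile (\<lambda>z. z < x) r in
      if s = [] then (r @ [x]) # rs
      else (p @ x # tl s) # row_insert rs (hd s))"

definition insertion_tableau :: "nat list \<Rightarrow> nat list list" where
  "insertion_tableau w = foldl row_insert [] w"

definition dyck_pattern_interval :: "nat list \<Rightarrow> nat \<Rightarrow> nat \<Rightarrow> bool" where
  "dyck_pattern_interval pi i m \<longleftrightarrow>
     1 \<le> m \<and> 1 \<le> i \<and> i + 2 * m \<le> length pi \<and>
     insertion_tableau (filter (\<lambda>a. a \<in> {i..i + 2 * m}) pi)
       = [[i..<i + m + 1], [i + m + 1..<i + 2 * m + 1]]"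

definition tab_size :: "nat list list \<Rightarrow> nat" where
  "tab_size T = length (concat T)"

definition row_of :: "nat list list \<Rightarrow> nat \<Rightarrow> nat" where
  "row_of T a = (THE r. r < length T \<and> a \<in> set (T ! r))"

definition descents :: "nat list list \<Rightarrow> nat set" where
  "descents T = {d. 1 \<le> d \<and> d + 1 \<le> tab_size T \<and> row_of T d < row_of T (d + 1)}"

definition Des :: "nat list list \<Rightarrow> nat list" where
  "Des T = (let ds = sorted_list_of_set (descents T);
                bs = 0 # ds @ [tab_size T]
            in map (\<lambda>k. bs ! (k + 1) - bs ! k) [0..<length ds + 1])"

definition comp_block :: "nat list \<Rightarrow> nat \<Rightarrow> nat set" where
  "comp_block alpha j = {sum_list (take (j - 1) alpha) + 1 .. sum_list (take j alpha)}"

end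

theory Submission
  imports Defs
begin

text \<open>
  In a word without repeated letters, d+1 precedes d iff d+1 ends up in a strictly higher row
  of the insertion tableau than d: inserting any other letter, which compares with d and d+1
  in the same way, preserves the relative position of the two. In the row reading word of a
  standard tableau T, d+1 precedes d iff d+1 lies strictly higher, i.e. iff d is a descent of T.
  Restricting the reading word to a Dyck pattern interval [i, i+2m] keeps relative orders, so
  the two-row insertion tableau shows that i+m is the only descent d of T with i \<le> d < i+2m.
  Hence [i, i+m] and [i+m+1, i+2m] fall into the two blocks of Des T on either side of i+m.
\<close>

section \<open>Relative order in words and in tableau rows\<close>

fun precedes :: "'a \<Rightarrow> 'a \<Rightarrow> 'a list \<Rightarrow> bool" where
  "precedes a b [] = False"
| "precedes a b (c # w) \<longleftrightarrow> (c = a \<and> b \<in> set w) \<or> precedes a b w"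

lemma precedes_imp_mem: "precedes a b w \<Longrightarrow> a \<in> set w \<and> b \<in> set w"
  by (induction w) auto

lemma precedes_append:
  "precedes a b (u @ v) \<longleftrightarrow> precedes a b u \<or> precedes a b v \<or> (a \<in> set u \<and> b \<in> set v)"
  by (induction u) auto

lemma precedes_filter: "P a \<Longrightarrow> P b \<Longrightarrow> precedes a b (filter P w) \<longleftrightarrow> precedes a b w"
  by (induction w) auto

lemma precedes_asym: "distinct w \<Longrightarrow> precedes a b w \<Longrightarrow> \<not> precedes b a w"
  by (induction w) (auto dest: precedes_imp_mem)

lemma precedes_sorted:
  "sorted_wrt (<) (w :: 'a::order list) \<Longrightarrow> a \<in> set w \<Longrightarrow> b \<in> set w \<Longrightarrow> a < b \<Longrightarrow> precedes a b w"
  by (induction w) (auto dest: order.asym)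

definition in_row :: "'a list list \<Rightarrow> nat \<Rightarrow> 'a \<Rightarrow> bool" where
  "in_row P k e \<longleftrightarrow> k < length P \<and> e \<in> set (P ! k)"

definition rows_sorted :: "'a::linorder list list \<Rightarrow> bool" where
  "rows_sorted P \<longleftrightarrow> (\<forall>r\<in>set P. sorted_wrt (<) r)"

lemma in_row_Nil [simp]: "\<not> in_row [] k e"
  and in_row_Cons_0 [simp]: "in_row (r # rs) 0 e \<longleftrightarrow> e \<in> set r"
  and in_row_Cons_Suc [simp]: "in_row (r # rs) (Suc k) e \<longleftrightarrow> in_row rs k e"
  by (simp_all add: in_row_def)

lemma in_row_ex: "e \<in> set (concat P) \<Longrightarrow> \<exists>k. in_row P k e"
  unfolding in_row_def by (metis UN_iff in_set_conv_nth set_concat)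

lemma in_row_unique: "distinct (concat P) \<Longrightarrow> in_row P a e \<Longrightarrow> in_row P b e \<Longrightarrow> a = b"
proof (induction P arbitrary: a b)
  case (Cons r rs)
  then show ?case
    by (cases a; cases b) (auto simp: in_row_def disjoint_iff dest!: nth_mem)
qed simp

lemma in_row_rev: "in_row P k e \<Longrightarrow> in_row (rev P) (length P - Suc k) e"
  by (auto simp: in_row_def rev_nth Suc_diff_Suc)

lemma precedes_concat_same_row: "in_row L p a \<Longrightarrow> precedes a b (L ! p) \<Longrightarrow> precedes a b (concat L)"
proof (induction L arbitrary: p)
  case (Cons r rs)
  then show ?case by (cases p) (auto simp: precedes_append)
qed simp

lemma precedes_concat_lower_row: "p < q \<Longrightarrow> in_row L p a \<Longrightarrow> in_row L q b \<Longrightarrow> precedes a b (concat L)"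
proof (induction L arbitrary: p q)
  case (Cons r rs)
  then show ?case
    by (cases p; cases q) (auto simp: precedes_append in_row_def)
qed simp

lemma precedes_concat_iff:
  assumes "rows_sorted L" "distinct (concat L)" "in_row L p x" "in_row L q y" "x < y"
  shows "precedes y x (concat L) \<longleftrightarrow> q < p"
proof (cases p q rule: linorder_cases)
  case less
  then show ?thesis
    using precedes_concat_lower_row[OF less assms(3,4)] precedes_asym[OF assms(2)] by auto
next
  case equal
  have "precedes x y (L ! p)"
    using assms equal by (intro precedes_sorted) (auto simp: in_row_def rows_sorted_def)
  then show ?thesis
    using precedes_concat_same_row[OF assms(3)] precedes_asym[OF assms(2)] equal by auto
next
  case greater
  then show ?thesis using precedes_concat_lower_row[OF greater assms(4,3)] by simp
qed

section \<open>Schensted insertion\<close>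

lemma row_insert_Cons_append: "\<forall>z\<in>set r. z < x \<Longrightarrow> row_insert (r # rs) x = (r @ [x]) # rs"
  by simp

lemma row_insert_Cons_bump:
  assumes "\<not> (\<forall>z\<in>set r. z < x)"
  obtains p y t where "r = p @ y # t" "\<forall>a\<in>set p. a < x" "x \<le> y"
    "row_insert (r # rs) x = (p @ x # t) # row_insert rs y"
proof -
  let ?s = "dropWhile (\<lambda>z. z < x) r"
  have ne: "?s \<noteq> []" using assms by simp
  then have "r = takeWhile (\<lambda>z. z < x) r @ hd ?s # tl ?s" by simp
  moreover have "\<forall>a\<in>set (takeWhile (\<lambda>z. z < x) r). a < x" by (auto dest: set_takeWhileD)
  moreover have "x \<le> hd ?s" using hd_dropWhile[OF ne] by simp
  moreover have "row_insert (r # rs) x = (takeWhile (\<lambda>z. z < x) r @ x # tl ?s) # row_insert rs (hd ?s)"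
    using ne unfolding row_insert.simps Let_def by (simp only: if_False)
  ultimately show ?thesis by (rule that)
qed

lemma in_row_row_insert_Cons_append:
  "\<forall>z\<in>set r. z < x \<Longrightarrow> in_row (r # rs) k e \<Longrightarrow> in_row (row_insert (r # rs) x) k e"
  by (cases k) (auto simp: row_insert_Cons_append)

lemma in_row_row_insert_0: "in_row (row_insert P x) 0 x"
  by (cases P) (auto simp: Let_def)

lemma rows_sorted_row_insert: "rows_sorted P \<Longrightarrow> rows_sorted (row_insert P x)"
proof (induction P arbitrary: x)
  case (Cons r rs)
  show ?case
  proof (cases "\<forall>z\<in>set r. z < x")
    case True
    then show ?thesis
      using Cons.prems by (auto simp: row_insert_Cons_append rows_sorted_def sorted_wrt_append)
  next
    case False
    then obtain p y t where bump: "r = p @ y # t" "\<forall>a\<in>set p. a < x" "x \<le> y"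
      "row_insert (r # rs) x = (p @ x # t) # row_insert rs y" by (rule row_insert_Cons_bump)
    have "sorted_wrt (<) (p @ x # t)"
      using Cons.prems bump(1-3) by (auto simp: rows_sorted_def sorted_wrt_append)
    then show ?thesis
      using bump(4) Cons.prems Cons.IH[of y] by (simp add: rows_sorted_def)
  qed
qed (simp add: rows_sorted_def)

lemma set_concat_row_insert: "set (concat (row_insert P x)) = insert x (set (concat P))"
proof (induction P arbitrary: x)
  case (Cons r rs)
  show ?case
  proof (cases "\<forall>z\<in>set r. z < x")
    case False
    then obtain p y t where "r = p @ y # t"
      "row_insert (r # rs) x = (p @ x # t) # row_insert rs y" by (rule row_insert_Cons_bump)
    then show ?thesis using Cons.IH by auto
  qed (auto simp: row_insert_Cons_append)
qed simp

lemma distinct_concat_row_insert: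
  "distinct (concat P) \<Longrightarrow> x \<notin> set (concat P) \<Longrightarrow> distinct (concat (row_insert P x))"
proof (induction P arbitrary: x)
  case (Cons r rs)
  show ?case
  proof (cases "\<forall>z\<in>set r. z < x")
    case False
    then obtain p y t where bump: "r = p @ y # t" "\<forall>a\<in>set p. a < x" "x \<le> y"
      "row_insert (r # rs) x = (p @ x # t) # row_insert rs y" by (rule row_insert_Cons_bump)
    have "distinct (concat (row_insert rs y))" using Cons bump(1) by simp
    moreover have "set (concat (row_insert rs y)) = insert y (set (concat rs))"
      by (rule set_concat_row_insert)
    ultimately show ?thesis using Cons.prems bump by (auto simp del: set_concat)
  qed (use Cons.prems in \<open>auto simp: row_insert_Cons_append\<close>)
qed simp

lemma row_insert_moves_up: "in_row P k e \<Longrightarrow> \<exists>k'\<ge>k. in_row (row_insert P x) k' e"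
proof (induction P arbitrary: x k)
  case (Cons r rs)
  show ?case
  proof (cases "\<forall>z\<in>set r. z < x")
    case True
    then show ?thesis
      using Cons.prems in_row_row_insert_Cons_append by blast
  next
    case False
    then obtain p y t where bump: "r = p @ y # t"
      "row_insert (r # rs) x = (p @ x # t) # row_insert rs y" by (rule row_insert_Cons_bump)
    show ?thesis
    proof (cases k)
      case 0
      then show ?thesis
        using Cons.prems bump in_row_row_insert_0[of rs y]
        by (cases "e = y") (auto intro: exI[of _ 1] exI[of _ 0])
    next
      case (Suc k0)
      then obtain k' where "k' \<ge> k0" "in_row (row_insert rs y) k' e"
        using Cons.prems Cons.IH by fastforce
      then show ?thesis using bump Suc by (intro exI[of _ "Suc k'"]) simp
    qed
  qed
qed simp

definition suc_above :: "nat list list \<Rightarrow> nat \<Rightarrow> bool" where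
  "suc_above P d \<longleftrightarrow> (\<exists>a b. a < b \<and> in_row P a d \<and> in_row P b (Suc d))"

definition suc_weakly_below :: "nat list list \<Rightarrow> nat \<Rightarrow> bool" where
  "suc_weakly_below P d \<longleftrightarrow> (\<exists>a b. b \<le> a \<and> in_row P a d \<and> in_row P b (Suc d))"

lemma suc_above_Cons: "suc_above P d \<Longrightarrow> suc_above (r # P) d"
  unfolding suc_above_def by (metis in_row_Cons_Suc Suc_less_eq)

lemma suc_weakly_below_Cons: "suc_weakly_below P d \<Longrightarrow> suc_weakly_below (r # P) d"
  unfolding suc_weakly_below_def by (metis in_row_Cons_Suc Suc_le_mono)

lemma not_suc_above_and_weakly_below:
  "distinct (concat P) \<Longrightarrow> suc_above P d \<Longrightarrow> \<not> suc_weakly_below P d"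
  unfolding suc_above_def suc_weakly_below_def by (metis in_row_unique leD)

text \<open>No letter lies strictly between d and d+1, so d bumps d+1 out of the bottom row.\<close>
lemma suc_above_row_insert_pred:
  assumes "rows_sorted Q" "d \<notin> set (concat Q)" "in_row Q c (Suc d)"
  shows "suc_above (row_insert Q d) d"
proof (cases c)
  case (Suc c0)
  obtain k' where "k' \<ge> c" "in_row (row_insert Q d) k' (Suc d)"
    using row_insert_moves_up[OF assms(3)] by blast
  then show ?thesis
    using in_row_row_insert_0[of Q d] Suc unfolding suc_above_def by (intro exI[of _ 0] exI[of _ k']) auto
next
  case 0
  then obtain r rs where Q: "Q = r # rs" "Suc d \<in> set r"
    using assms(3) by (cases Q) auto
  then have "\<not> (\<forall>z\<in>set r. z < d)" using less_not_sym[OF lessI] by blast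
  then obtain p y t where bump: "r = p @ y # t" "\<forall>a\<in>set p. a < d" "d \<le> y"
    "row_insert (r # rs) d = (p @ d # t) # row_insert rs y" by (rule row_insert_Cons_bump)
  have "y \<noteq> d" using assms(2) Q bump(1) by auto
  moreover have "y \<le> Suc d"
    using assms(1) Q bump(1,2) by (auto simp: rows_sorted_def sorted_wrt_append)
  ultimately have "y = Suc d" using bump(3) by simp
  then show ?thesis
    using bump(4) Q in_row_row_insert_0[of rs y] unfolding suc_above_def
    by (intro exI[of _ 0] exI[of _ 1]) simp
qed

lemma suc_above_row_insert:
  assumes "rows_sorted P" "distinct (concat P)" "x \<notin> set (concat P)" "suc_above P d"
  shows "suc_above (row_insert P x) d"
  using assms
proof (induction P arbitrary: x)
  case (Cons r rs)
  obtain a b where ab: "a < b" "in_row (r # rs) a d" "in_row (r # rs) b (Suc d)"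
    using Cons.prems(4) unfolding suc_above_def by blast
  then obtain b0 where b0: "b = Suc b0" "in_row rs b0 (Suc d)" by (cases b) auto
  show ?case
  proof (cases "\<forall>z\<in>set r. z < x")
    case True
    then show ?thesis
      using ab in_row_row_insert_Cons_append[OF True] unfolding suc_above_def by blast
  next
    case False
    then obtain p y t where bump: "r = p @ y # t"
      "row_insert (r # rs) x = (p @ x # t) # row_insert rs y" by (rule row_insert_Cons_bump)
    have rs: "rows_sorted rs" "distinct (concat rs)" "y \<notin> set (concat rs)"
      using Cons.prems(1,2) bump(1) by (auto simp: rows_sorted_def)
    consider (bumped) "y = d" | (stays) "a = 0" "y \<noteq> d" | (higher) a0 where "a = Suc a0"
      using ab(2) by (cases a) auto
    then show ?thesis
    proof cases
      case bumped
      then show ?thesis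
        using suc_above_row_insert_pred[OF rs(1) _ b0(2)] rs(3) bump(2) suc_above_Cons by simp
    next
      case stays
      obtain k' where "in_row (row_insert rs y) k' (Suc d)"
        using row_insert_moves_up[OF b0(2)] by blast
      then show ?thesis
        using stays ab(2) bump unfolding suc_above_def by (intro exI[of _ 0] exI[of _ "Suc k'"]) auto
    next
      case higher
      then have "suc_above rs d"
        using ab b0 unfolding suc_above_def by auto
      then show ?thesis
        using Cons.IH[OF rs] bump(2) suc_above_Cons by simp
    qed
  qed
qed (simp add: suc_above_def)

lemma suc_weakly_below_row_insert:
  assumes "rows_sorted P" "distinct (concat P)" "x \<notin> set (concat P)" "suc_weakly_below P d"
  shows "suc_weakly_below (row_insert P x) d"
  using assms
proof (induction P arbitrary: x)
  case (Cons r rs)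
  obtain a b where ab: "b \<le> a" "in_row (r # rs) a d" "in_row (r # rs) b (Suc d)"
    using Cons.prems(4) unfolding suc_weakly_below_def by blast
  show ?case
  proof (cases "\<forall>z\<in>set r. z < x")
    case True
    then show ?thesis
      using ab in_row_row_insert_Cons_append[OF True] unfolding suc_weakly_below_def by blast
  next
    case False
    then obtain p y t where bump: "r = p @ y # t" "\<forall>a\<in>set p. a < x" "x \<le> y"
      "row_insert (r # rs) x = (p @ x # t) # row_insert rs y" by (rule row_insert_Cons_bump)
    have rs: "rows_sorted rs" "distinct (concat rs)" "y \<notin> set (concat rs)"
      using Cons.prems(1,2) bump(1) by (auto simp: rows_sorted_def)
    consider (bumped) "b = 0" "y = Suc d" | (stays) "b = 0" "y \<noteq> Suc d" | (higher) b0 where "b = Suc b0"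
      by (cases b) auto
    then show ?thesis
    proof cases
      case bumped
      txt \<open>In the bottom row d would precede y = d+1, forcing d < x \<le> d+1.\<close>
      have "d \<notin> set r"
        using Cons.prems(1,3) ab(3) bump bumped by (auto simp: rows_sorted_def sorted_wrt_append)
      then obtain a0 where "in_row rs a0 d" using ab(2) by (cases a) auto
      then obtain k' where "in_row (row_insert rs y) k' d"
        using row_insert_moves_up by blast
      then show ?thesis
        using bump(4) bumped in_row_row_insert_0[of rs y] unfolding suc_weakly_below_def
        by (intro exI[of _ "Suc k'"] exI[of _ 1]) simp
    next
      case stays
      obtain k' where "in_row (row_insert (r # rs) x) k' d"
        using row_insert_moves_up[OF ab(2)] by blast
      then show ?thesis
        using stays ab(3) bump unfolding suc_weakly_below_def by (intro exI[of _ k'] exI[of _ 0]) auto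
    next
      case higher
      then have "suc_weakly_below rs d"
        using ab unfolding suc_weakly_below_def by (cases a) auto
      then show ?thesis
        using Cons.IH[OF rs] bump(4) suc_weakly_below_Cons by simp
    qed
  qed
qed (simp add: suc_weakly_below_def)

lemma insertion_tableau_snoc: "insertion_tableau (v @ [x]) = row_insert (insertion_tableau v) x"
  by (simp add: insertion_tableau_def)

lemma rows_sorted_insertion_tableau: "rows_sorted (insertion_tableau w)"
proof (induction w rule: rev_induct)
  case Nil
  then show ?case by (simp add: insertion_tableau_def rows_sorted_def)
next
  case (snoc x v)
  then show ?case by (simp add: insertion_tableau_snoc rows_sorted_row_insert)
qed

lemma set_concat_insertion_tableau: "set (concat (insertion_tableau w)) = set w"
proof (induction w rule: rev_induct)
  case Nil
  then show ?case by (simp add: insertion_tableau_def)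
next
  case (snoc x v)
  then show ?case by (simp del: set_concat add: insertion_tableau_snoc set_concat_row_insert)
qed

lemma distinct_concat_insertion_tableau: "distinct w \<Longrightarrow> distinct (concat (insertion_tableau w))"
proof (induction w rule: rev_induct)
  case Nil
  then show ?case by (simp add: insertion_tableau_def)
next
  case (snoc x v)
  then show ?case
    by (simp del: set_concat
        add: insertion_tableau_snoc distinct_concat_row_insert set_concat_insertion_tableau)
qed

lemma insertion_tableau_suc_position:
  assumes "distinct w" "d \<in> set w" "Suc d \<in> set w"
  shows "(precedes (Suc d) d w \<longrightarrow> suc_above (insertion_tableau w) d)
    \<and> (\<not> precedes (Suc d) d w \<longrightarrow> suc_weakly_below (insertion_tableau w) d)"
  using assms
proof (induction w rule: rev_induct)
  case (snoc x v)
  let ?P = "insertion_tableau v"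
  have v: "distinct v" "x \<notin> set v" using snoc.prems(1) by auto
  have P: "rows_sorted ?P" "distinct (concat ?P)" "x \<notin> set (concat ?P)"
    using v by (simp_all del: set_concat add: rows_sorted_insertion_tableau
        distinct_concat_insertion_tableau set_concat_insertion_tableau)
  have IT: "insertion_tableau (v @ [x]) = row_insert ?P x" by (rule insertion_tableau_snoc)
  consider (pred) "x = d" | (suc) "x = Suc d" | (other) "x \<noteq> d" "x \<noteq> Suc d" by blast
  then show ?case
  proof cases
    case pred
    then have "Suc d \<in> set v" using snoc.prems(3) by simp
    then obtain c where "in_row ?P c (Suc d)"
      using in_row_ex set_concat_insertion_tableau by metis
    then have "suc_above (row_insert ?P x) d"
      using suc_above_row_insert_pred[OF P(1)] P(3) pred by simp
    moreover have "precedes (Suc d) d (v @ [x])"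
      using \<open>Suc d \<in> set v\<close> pred by (simp add: precedes_append)
    ultimately show ?thesis by (simp add: IT)
  next
    case suc
    then have "d \<in> set v" using snoc.prems(2) by simp
    then obtain c where "in_row ?P c d"
      using in_row_ex set_concat_insertion_tableau by metis
    then obtain k' where "in_row (row_insert ?P x) k' d"
      using row_insert_moves_up by blast
    then have "suc_weakly_below (row_insert ?P x) d"
      using in_row_row_insert_0[of ?P x] suc unfolding suc_weakly_below_def by blast
    moreover have "\<not> precedes (Suc d) d (v @ [x])"
      using v(2) suc by (auto simp: precedes_append dest: precedes_imp_mem)
    ultimately show ?thesis by (simp add: IT)
  next
    case other
    then have "d \<in> set v" "Suc d \<in> set v" using snoc.prems(2,3) by auto
    then have IH: "(precedes (Suc d) d v \<longrightarrow> suc_above ?P d)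
        \<and> (\<not> precedes (Suc d) d v \<longrightarrow> suc_weakly_below ?P d)"
      using snoc.IH v(1) by blast
    have "precedes (Suc d) d (v @ [x]) \<longleftrightarrow> precedes (Suc d) d v"
      using other by (simp add: precedes_append)
    then show ?thesis
      unfolding IT using IH suc_above_row_insert[OF P] suc_weakly_below_row_insert[OF P] by blast
  qed
qed simp

lemma insertion_tableau_suc_above_iff:
  assumes "distinct w" "d \<in> set w" "Suc d \<in> set w"
  shows "suc_above (insertion_tableau w) d \<longleftrightarrow> precedes (Suc d) d w"
  using insertion_tableau_suc_position[OF assms] not_suc_above_and_weakly_below
    distinct_concat_insertion_tableau[OF assms(1)] by blast

lemma suc_above_two_row_tableau:
  assumes "1 \<le> m"
  shows "suc_above [[i..<i + m + 1], [i + m + 1..<i + 2 * m + 1]] d \<longleftrightarrow> d = i + m"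
proof -
  have rows: "in_row [[i..<i + m + 1], [i + m + 1..<i + 2 * m + 1]] k e \<longleftrightarrow>
      (k = 0 \<and> i \<le> e \<and> e \<le> i + m) \<or> (k = 1 \<and> i + m + 1 \<le> e \<and> e \<le> i + 2 * m)" for k e
    by (cases k) (auto simp: in_row_def less_Suc_eq)
  show ?thesis
    unfolding suc_above_def rows using assms by auto
qed

section \<open>Descents of a standard tableau\<close>

lemma SYT_entries:
  assumes "T \<in> SYT lam"
  shows "rows_sorted T" "distinct (concat T)" "set (concat T) = {1..tab_size T}"
proof -
  have T: "map length T = lam \<and> distinct (concat T) \<and> set (concat T) = {1..sum_list lam}
      \<and> (\<forall>r < length T. sorted_wrt (<) (T ! r))"
    using assms unfolding SYT_def mem_Collect_eq by (elim conjE) (intro conjI)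
  then show "set (concat T) = {1..tab_size T}" "distinct (concat T)"
    by (auto simp: tab_size_def length_concat)
  show "rows_sorted T"
    using T unfolding rows_sorted_def by (auto simp: in_set_conv_nth)
qed

lemma row_of_eqI:
  assumes "distinct (concat T)" "in_row T r x"
  shows "row_of T x = r"
  unfolding row_of_def
proof (rule the_equality)
  show "r < length T \<and> x \<in> set (T ! r)" using assms(2) by (simp add: in_row_def)
  show "r' = r" if "r' < length T \<and> x \<in> set (T ! r')" for r'
    using in_row_unique[OF assms(1) _ assms(2), of r'] that unfolding in_row_def by blast
qed

lemma length_row_word: "length (row_word T) = tab_size T"
  by (simp add: row_word_def tab_size_def length_concat rev_map[symmetric])

lemma set_row_word: "set (row_word T) = set (concat T)"
  by (simp add: row_word_def)

lemma distinct_row_word: "distinct (row_word T) \<longleftrightarrow> distinct (concat T)"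
  unfolding row_word_def by (induction T) auto

lemma row_word_precedes_iff:
  assumes "rows_sorted T" "distinct (concat T)" "in_row T p x" "in_row T q y" "x < y"
  shows "precedes y x (row_word T) \<longleftrightarrow> p < q"
proof -
  have "rows_sorted (rev T)" "distinct (concat (rev T))"
    using assms(1,2) distinct_row_word[of T] by (simp_all add: rows_sorted_def row_word_def)
  then have "precedes y x (concat (rev T)) \<longleftrightarrow> length T - Suc q < length T - Suc p"
    using precedes_concat_iff in_row_rev[OF assms(3)] in_row_rev[OF assms(4)] assms(5) by blast
  also have "\<dots> \<longleftrightarrow> p < q"
    using assms(3,4) by (auto simp: in_row_def)
  finally show ?thesis by (simp add: row_word_def)
qed

lemma descent_iff_suc_precedes:
  assumes "T \<in> SYT lam" "1 \<le> d" "d < tab_size T"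
  shows "d \<in> descents T \<longleftrightarrow> precedes (Suc d) d (row_word T)"
proof -
  note T = SYT_entries[OF assms(1)]
  have mem: "d \<in> set (concat T)" "Suc d \<in> set (concat T)"
    unfolding T(3) using assms(2,3) by auto
  obtain p q where pq: "in_row T p d" "in_row T q (Suc d)"
    using in_row_ex[OF mem(1)] in_row_ex[OF mem(2)] by blast
  have "d \<in> descents T \<longleftrightarrow> row_of T d < row_of T (Suc d)"
    using assms(2,3) by (simp add: descents_def)
  also have "\<dots> \<longleftrightarrow> p < q"
    by (simp add: row_of_eqI[OF T(2) pq(1)] row_of_eqI[OF T(2) pq(2)])
  also have "\<dots> \<longleftrightarrow> precedes (Suc d) d (row_word T)"
    using row_word_precedes_iff[OF T(1,2) pq] by simp
  finally show ?thesis .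
qed

lemma dyck_pattern_interval_descents:
  assumes "T \<in> SYT lam" "dyck_pattern_interval (row_word T) i m" "i \<le> d" "d < i + 2 * m"
  shows "d \<in> descents T \<longleftrightarrow> d = i + m"
proof -
  define w where "w = filter (\<lambda>a. a \<in> {i..i + 2 * m}) (row_word T)"
  note T = SYT_entries[OF assms(1)]
  have dyck: "1 \<le> m" "1 \<le> i" "i + 2 * m \<le> tab_size T"
    "insertion_tableau w = [[i..<i + m + 1], [i + m + 1..<i + 2 * m + 1]]"
    using assms(2) by (simp_all add: dyck_pattern_interval_def length_row_word w_def)
  have w: "distinct w" "d \<in> set w" "Suc d \<in> set w"
    using T(2) dyck assms(3,4) unfolding w_def set_filter set_row_word T(3)
    by (simp_all add: distinct_row_word)
  have "d \<in> descents T \<longleftrightarrow> precedes (Suc d) d (row_word T)"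
    using descent_iff_suc_precedes[OF assms(1)] dyck assms(3,4) by simp
  also have "\<dots> \<longleftrightarrow> precedes (Suc d) d w"
    unfolding w_def using assms(3,4) by (simp add: precedes_filter)
  also have "\<dots> \<longleftrightarrow> suc_above (insertion_tableau w) d"
    using insertion_tableau_suc_above_iff[OF w] by simp
  also have "\<dots> \<longleftrightarrow> d = i + m"
    using dyck(1) by (simp only: dyck(4) suc_above_two_row_tableau)
  finally show ?thesis .
qed

section \<open>Blocks of the descent composition\<close>

definition Des_bounds :: "nat list list \<Rightarrow> nat list" where
  "Des_bounds T = 0 # sorted_list_of_set (descents T) @ [tab_size T]"

lemma descents_subset: "descents T \<subseteq> {1..<tab_size T}"
  by (auto simp: descents_def)

lemma finite_descents: "finite (descents T)"
  by (rule finite_subset[OF descents_subset]) simp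

lemma length_Des_bounds: "length (Des_bounds T) = card (descents T) + 2"
  by (simp add: Des_bounds_def)

lemma set_Des_bounds: "set (Des_bounds T) = insert 0 (insert (tab_size T) (descents T))"
  using finite_descents by (auto simp: Des_bounds_def)

lemma sorted_Des_bounds: "sorted (Des_bounds T)"
  using descents_subset[of T] finite_descents[of T]
  by (auto simp: Des_bounds_def sorted_append)

lemma strict_sorted_Des_bounds: "0 < tab_size T \<Longrightarrow> sorted_wrt (<) (Des_bounds T)"
  using descents_subset[of T] finite_descents[of T]
  by (auto simp: Des_bounds_def sorted_wrt_append)

lemma Des_eq: "Des T = map (\<lambda>k. Des_bounds T ! (k + 1) - Des_bounds T ! k) [0..<card (descents T) + 1]"
  by (simp add: Des_def Des_bounds_def Let_def nth_append)

lemma length_Des: "length (Des T) = card (descents T) + 1"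
  by (simp add: Des_eq)

lemma sum_list_take_Des: "j \<le> card (descents T) + 1 \<Longrightarrow> sum_list (take j (Des T)) = Des_bounds T ! j"
proof (induction j)
  case 0
  then show ?case by (simp add: Des_bounds_def)
next
  case (Suc j)
  have "take (Suc j) (Des T) = take j (Des T) @ [Des_bounds T ! (j + 1) - Des_bounds T ! j]"
    using Suc.prems by (simp add: take_Suc_conv_app_nth length_Des) (simp add: Des_eq del: upt_Suc)
  moreover have "Des_bounds T ! j \<le> Des_bounds T ! (j + 1)"
    using sorted_Des_bounds Suc.prems by (simp add: sorted_iff_nth_mono length_Des_bounds)
  ultimately show ?case using Suc by simp
qed

lemma comp_block_Des:
  "1 \<le> j \<Longrightarrow> j \<le> card (descents T) + 1 \<Longrightarrow>
    comp_block (Des T) j = {Des_bounds T ! (j - 1) + 1 .. Des_bounds T ! j}"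
  by (simp add: comp_block_def sum_list_take_Des)

lemma comp_blocks_around_descent:
  assumes c: "c \<in> descents T" and ick: "1 \<le> i" "i \<le> c" "c < k" "k \<le> tab_size T"
    and only_c: "\<forall>d\<in>descents T. i \<le> d \<and> d < k \<longrightarrow> d = c"
  shows "\<exists>j. 1 \<le> j \<and> j < length (Des T)
    \<and> {i..c} \<subseteq> comp_block (Des T) j \<and> {c + 1..k} \<subseteq> comp_block (Des T) (j + 1)"
proof -
  let ?bs = "Des_bounds T"
  have strict: "sorted_wrt (<) ?bs"
    using ick by (intro strict_sorted_Des_bounds) simp
  have only_c_bound: "b = c" if "b \<in> set ?bs" "i \<le> b" "b < k" for b
    using that only_c ick by (auto simp: set_Des_bounds)
  obtain q where q: "q < length ?bs" "?bs ! q = c"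
    using c set_Des_bounds by (metis insertCI in_set_conv_nth)
  have "q \<noteq> 0" using q(2) ick by (cases q) (auto simp: Des_bounds_def)
  moreover have "q \<noteq> card (descents T) + 1"
    using q ick by (auto simp: Des_bounds_def nth_append)
  ultimately have q_range: "1 \<le> q" "q < card (descents T) + 1"
    using q(1) by (simp_all add: length_Des_bounds)
  have "?bs ! (q - 1) < c" "?bs ! (q - 1) \<in> set ?bs"
    using sorted_wrt_nth_less[OF strict, of "q - 1" q] q q_range by auto
  then have lower: "?bs ! (q - 1) < i"
    using only_c_bound[of "?bs ! (q - 1)"] ick by (cases "i \<le> ?bs ! (q - 1)") auto
  have "c < ?bs ! (q + 1)" "?bs ! (q + 1) \<in> set ?bs"
    using sorted_wrt_nth_less[OF strict, of q "q + 1"] q q_range by (auto simp: length_Des_bounds)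
  then have upper: "k \<le> ?bs ! (q + 1)"
    using only_c_bound[of "?bs ! (q + 1)"] ick by (cases "?bs ! (q + 1) < k") auto
  have "{i..c} \<subseteq> comp_block (Des T) q"
    using comp_block_Des[of q T] q_range q(2) lower by auto
  moreover have "{c + 1..k} \<subseteq> comp_block (Des T) (q + 1)"
    using comp_block_Des[of "q + 1" T] q_range q(2) upper by auto
  ultimately show ?thesis
    using q_range by (auto simp: length_Des)
qed

theorem lemma4p20:
  fixes lam :: "nat list" and T :: "nat list list" and i m :: nat
  assumes "T \<in> SYT lam"
    and "dyck_pattern_interval (row_word T) i m"
  shows "\<exists>j. 1 \<le> j \<and> j < length (Des T)
           \<and> {i..i + m - 1} \<union> {i + m} \<subseteq> comp_block (Des T) j
           \<and> {i + m + 1..i + 2 * m} \<subseteq> comp_block (Des T) (j + 1)"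
proof -
  have m: "1 \<le> m" "1 \<le> i" "i + 2 * m \<le> tab_size T"
    using assms(2) by (simp_all add: dyck_pattern_interval_def length_row_word)
  note descents = dyck_pattern_interval_descents[OF assms]
  have mid: "i + m \<in> descents T" "i \<le> i + m" "i + m < i + 2 * m"
    using descents[of "i + m"] m(1) by simp_all
  have only_mid: "\<forall>d\<in>descents T. i \<le> d \<and> d < i + 2 * m \<longrightarrow> d = i + m"
  proof (intro ballI impI)
    fix d assume "d \<in> descents T" "i \<le> d \<and> d < i + 2 * m"
    then show "d = i + m" using descents[of d] by simp
  qed
  obtain j where j: "1 \<le> j" "j < length (Des T)"
    "{i..i + m} \<subseteq> comp_block (Des T) j" "{i + m + 1..i + 2 * m} \<subseteq> comp_block (Des T) (j + 1)"
    using comp_blocks_around_descent[OF mid(1) m(2) mid(2,3) m(3) only_mid] by blast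
  have "{i..i + m - 1} \<union> {i + m} \<subseteq> {i..i + m}"
    by auto
  then show ?thesis
    using j by blast
qed

end
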